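(* For all real numbers $a,b,c>0$, \[ \frac{a^{2}b}{(a+b)^{3}} + \frac{ac^{2}}{(a+c)^{3}} + \frac{b^{2}c}{(b+c)^{3}} \leq \frac{3}{8}. \] *)

theory Defs
  imports Complex_Main
begin

end

theory Submission
  imports Defs
begin

text \<open>Each term is bounded separately by the two-variable estimate
  \<open>u\<^sup>2v/(u+v)\<^sup>3 \<le> 3/16 \<cdot> (1 - v\<^sup>2/(v\<^sup>2+vu+u\<^sup>2))\<close>, which is equivalent to
  \<open>3(u+v)\<^sup>4 - 16uv(u\<^sup>2+uv+v\<^sup>2) = (u-v)\<^sup>2(3u\<^sup>2+2uv+3v\<^sup>2) \<ge> 0\<close>.
  Summing, it remains to show that the cyclic sum of \<open>x\<^sup>2/(x\<^sup>2+xy+y\<^sup>2)\<close> is at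
  least 1; after clearing denominators the difference is half a sum of three squares.\<close>

lemma cube_ratio_le_quadratic_bound:
  fixes u v :: real
  assumes "u > 0" "v > 0"
  shows "u^2 * v / (u + v)^3 \<le> 3/16 * (1 - v^2 / (v^2 + v*u + u^2))"
proof -
  have D_pos: "v^2 + v*u + u^2 > 0" using assms by (simp add: add_pos_pos)
  have "3 * (u+v)^4 - 16 * u * v * (u^2 + u*v + v^2) = (u-v)^2 * (3*u^2 + 2*u*v + 3*v^2)"
    by (simp add: algebra_simps power2_eq_square power4_eq_xxxx power3_eq_cube)
  also have "\<dots> \<ge> 0" using assms by (intro mult_nonneg_nonneg) (auto simp: add_pos_pos)
  finally have poly: "16 * u * v * (u^2 + u*v + v^2) \<le> 3 * (u+v)^4" by simp
  have "1 - v^2 / (v^2 + v*u + u^2) = u * (u+v) / (v^2 + v*u + u^2)"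
    using D_pos by (simp add: field_simps power2_eq_square)
  moreover have "u^2 * v / (u + v)^3 \<le> 3/16 * (u * (u+v) / (v^2 + v*u + u^2))"
    using D_pos poly assms
    by (simp add: divide_simps power4_eq_xxxx power3_eq_cube power2_eq_square)
       (simp add: algebra_simps)
  ultimately show ?thesis by simp
qed

lemma cyclic_sum_square_div_quadratic_ge_1:
  fixes x y z :: real
  assumes "x > 0" "y > 0" "z > 0"
  shows "x^2 / (x^2 + x*y + y^2) + y^2 / (y^2 + y*z + z^2) + z^2 / (z^2 + z*x + x^2) \<ge> 1"
proof -
  define A B C where "A = x^2 + x*y + y^2" and "B = y^2 + y*z + z^2" and "C = z^2 + z*x + x^2"
  have pos: "A > 0" "B > 0" "C > 0"
    using assms unfolding A_def B_def C_def by (auto simp: add_pos_pos)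
  have "x^2 * B * C + y^2 * A * C + z^2 * A * B - A * B * C
      = ((x^2*y - y^2*z)^2 + (y^2*z - z^2*x)^2 + (z^2*x - x^2*y)^2) / 2"
    unfolding A_def B_def C_def by (simp add: algebra_simps power2_eq_square)
  then have "A * B * C \<le> x^2 * B * C + y^2 * A * C + z^2 * A * B"
    by (smt (verit) divide_nonneg_pos zero_le_power2)
  with pos have "1 \<le> x^2 / A + y^2 / B + z^2 / C"
    by (simp add: field_simps)
  then show ?thesis unfolding A_def B_def C_def .
qed

theorem mainTheorem9:
  fixes a b c :: real
  assumes "a > 0" and "b > 0" and "c > 0"
  shows "a^2 * b / (a + b)^3 + a * c^2 / (a + c)^3 + b^2 * c / (b + c)^3 \<le> 3 / 8"
proof -
  have "a^2 * b / (a + b)^3 \<le> 3/16 * (1 - b^2 / (b^2 + b*a + a^2))"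
    using cube_ratio_le_quadratic_bound[of a b] assms by simp
  moreover have "a * c^2 / (a + c)^3 \<le> 3/16 * (1 - a^2 / (a^2 + a*c + c^2))"
    using cube_ratio_le_quadratic_bound[of c a] assms by (simp add: add.commute mult.commute)
  moreover have "b^2 * c / (b + c)^3 \<le> 3/16 * (1 - c^2 / (c^2 + c*b + b^2))"
    using cube_ratio_le_quadratic_bound[of b c] assms by simp
  moreover have "b^2 / (b^2 + b*a + a^2) + a^2 / (a^2 + a*c + c^2) + c^2 / (c^2 + c*b + b^2) \<ge> 1"
    using cyclic_sum_square_div_quadratic_ge_1[of b a c] assms by simp
  ultimately show ?thesis unfolding right_diff_distrib by linarith
qed

end
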